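(* Let $M>0$ and $0\le\alpha<1$, and let $r_0=r_0(\alpha)$ be the real root in $(0,1)$ of the equation \[(1-\alpha)(1+M)(1-r)^3=M\big(1-\alpha+(1+\alpha)r\big).\] Let $\mathcal{F}$ be the class of analytic functions $f(z)=z+\sum_{n\ge2}a_nz^n$ on $\mathbb{D}$ with $|a_n|\le M$ for all $n\ge2$. Then every $f\in\mathcal{F}$ satisfies $\left|\frac{zf''(z)}{f'(z)}\right|\le1-\alpha$ for $|z|\le r_0$; $r_0(\alpha)$ is the radius of convexity of order $\alpha$ of $\mathcal{F}$; and $r_0(1/2)$ is the radius of uniform convexity of $\mathcal{F}$. All results are sharp (in particular $r_0$ in the first statement cannot be replaced by any larger number).
   Context: $\mathbb{D}=\{z\in\mathbb{C}:|z|<1\}$. For a class $\mathcal{F}$ of analytic functions on $\mathbb{D}$ normalized by $f(0)=0$, $f'(0)=1$, and $0\le\alpha<1$, the radius of convexity of order $\alpha$ of $\mathcal{F}$ is the supremum of $r\in(0,1]$ such that every $f\in\mathcal{F}$ satisfies $f'(z)\ne0$ and $\operatorname{Re}\big(1+zf''(z)/f'(z)\big)>\alpha$ for $|z|<r$. The radius of uniform convexity of $\mathcal{F}$ is the supremum of $r\in(0,1]$ such that every $f\in\mathcal{F}$ satisfies $f'(z)\ne0$ and $\operatorname{Re}\big(1+zf''(z)/f'(z)\big)>\left|zf''(z)/f'(z)\right|$ for $|z|<r$. *)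

theory Defs
  imports "HOL-Analysis.Analysis"
begin

definition bounded_coeff_class :: "real \<Rightarrow> (complex \<Rightarrow> complex) set" where
  "bounded_coeff_class M = {f. \<exists>a :: nat \<Rightarrow> complex.
      a 0 = 0 \<and> a 1 = 1 \<and> (\<forall>n\<ge>2. norm (a n) \<le> M) \<and>
      (\<forall>z\<in>ball 0 1. f z = (\<Sum>n. a n * z ^ n))}"

definition radius_convexity_order :: "(complex \<Rightarrow> complex) set \<Rightarrow> real \<Rightarrow> real" where
  "radius_convexity_order F \<alpha> = Sup {r \<in> {0<..1}. \<forall>f\<in>F. \<forall>z. norm z < r \<longrightarrow>
      deriv f z \<noteq> 0 \<and> Re (1 + z * deriv (deriv f) z / deriv f z) > \<alpha>}"

definition radius_uniform_convexity :: "(complex \<Rightarrow> complex) set \<Rightarrow> real" where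
  "radius_uniform_convexity F = Sup {r \<in> {0<..1}. \<forall>f\<in>F. \<forall>z. norm z < r \<longrightarrow>
      deriv f z \<noteq> 0 \<and>
      Re (1 + z * deriv (deriv f) z / deriv f z) > norm (z * deriv (deriv f) z / deriv f z)}"

end

theory Submission
  imports Defs
begin

text \<open>For f(z) = z + a_2 z^2 + a_3 z^3 + ... with |a_n| \<le> M and |z| = r < 1, comparing
  coefficientwise with the series of 1/(1-r)^2 and 2/(1-r)^3 gives |f'(z)| \<ge> 1 - M((1-r)^-2 - 1)
  and |f''(z)| \<le> 2M(1-r)^-3, hence a bound for |z f''(z)/f'(z)| depending only on r. Clearing
  denominators, that bound is at most 1 - \<alpha> exactly when the cubic
  (1-\<alpha>)(1+M)(1-r)^3 - M(1-\<alpha>+(1+\<alpha>)r), which decreases in r, is nonnegative, i.e. for r \<le> r0.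
  Since Re(1+w) \<ge> 1 - |w|, this gives convexity of order \<alpha> (and for \<alpha> = 1/2 uniform convexity)
  in |z| < r0. Both coefficient estimates are equalities for z - M(z^2 + z^3 + ...) at positive
  real z, where z f''/f' is real and negative; so just beyond r0 this function has either a
  critical point or z f''/f' < -(1-\<alpha>), which violates both convexity conditions.\<close>

lemma geometric_second_deriv_sums:
  fixes z :: "'a :: {real_normed_field,banach}"
  assumes "norm z < 1"
  shows "(\<lambda>n. of_nat (Suc n) * of_nat (Suc (Suc n)) * z ^ n) sums (2 / (1 - z) ^ 3)"
proof -
  have "(\<lambda>n. diffs (\<lambda>n. of_nat (Suc n)) n * z ^ n) sums (2 / (1 - z) ^ 3)"
  proof (rule termdiffs_sums_strong[where K = 1])
    show "(\<lambda>n. of_nat (Suc n) * w ^ n) sums (1 / (1 - w) ^ 2)" if "norm w < 1" for w :: 'a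
      using that by (rule geometric_deriv_sums)
    have "1 - z \<noteq> 0"
      using assms by auto
    then show "((\<lambda>w. 1 / (1 - w) ^ 2) has_field_derivative 2 / (1 - z) ^ 3) (at z)"
      by (auto intro!: derivative_eq_intros simp: divide_simps) algebra
  qed (use assms in auto)
  then show ?thesis
    by (simp add: diffs_def mult.commute)
qed

lemma summable_power_series_bounded_coeffs:
  fixes a :: "nat \<Rightarrow> 'a :: {real_normed_field,banach}"
  assumes "\<forall>n\<ge>N. norm (a n) \<le> B" and "norm z < 1"
  shows "summable (\<lambda>n. a n * z ^ n)"
proof (rule summable_comparison_test')
  show "summable (\<lambda>n. B * norm z ^ n)"
    using assms(2) by (intro summable_mult summable_geometric) simp
  show "norm (a n * z ^ n) \<le> B * norm z ^ n" if "n \<ge> N" for n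
    using assms(1) that by (simp add: norm_mult norm_power mult_right_mono)
qed

lemma power_series_derivs_sums:
  fixes a :: "nat \<Rightarrow> 'a :: {real_normed_field,banach}"
  assumes f: "\<forall>w\<in>ball 0 K. f w = (\<Sum>n. a n * w ^ n)"
    and summable: "\<And>w. norm w < K \<Longrightarrow> summable (\<lambda>n. a n * w ^ n)"
    and z: "norm z < K"
  shows "(\<lambda>n. diffs a n * z ^ n) sums deriv f z"
    and "(\<lambda>n. diffs (diffs a) n * z ^ n) sums deriv (deriv f) z"
proof -
  have summable': "summable (\<lambda>n. diffs a n * w ^ n)" if "norm w < K" for w
    using that summable by (rule termdiff_converges)
  have deriv_f: "deriv f w = (\<Sum>n. diffs a n * w ^ n)" if "norm w < K" for w
  proof (rule DERIV_imp_deriv, rule has_field_derivative_transform_within_open[where S = "ball 0 K"])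
    show "((\<lambda>w. \<Sum>n. a n * w ^ n) has_field_derivative (\<Sum>n. diffs a n * w ^ n)) (at w)"
      using summable that by (rule termdiffs_strong')
  qed (use f that in auto)
  have "deriv (deriv f) z = (\<Sum>n. diffs (diffs a) n * z ^ n)"
  proof (rule DERIV_imp_deriv, rule has_field_derivative_transform_within_open[where S = "ball 0 K"])
    show "((\<lambda>w. \<Sum>n. diffs a n * w ^ n) has_field_derivative (\<Sum>n. diffs (diffs a) n * z ^ n)) (at z)"
      using summable' z by (rule termdiffs_strong')
  qed (use deriv_f z in auto)
  then show "(\<lambda>n. diffs (diffs a) n * z ^ n) sums deriv (deriv f) z"
    using termdiff_converges[OF z summable'] by (simp add: summable_sums)
  show "(\<lambda>n. diffs a n * z ^ n) sums deriv f z"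
    using deriv_f[OF z] summable'[OF z] by (simp add: summable_sums)
qed

definition deriv_lower_bound :: "real \<Rightarrow> real \<Rightarrow> real" where
  "deriv_lower_bound M r = 1 - M * (1 / (1 - r) ^ 2 - 1)"

definition second_deriv_bound :: "real \<Rightarrow> real \<Rightarrow> real" where
  "second_deriv_bound M r = 2 * M / (1 - r) ^ 3"

lemma deriv_tail_majorant_sums:
  fixes r :: real
  assumes "\<bar>r\<bar> < 1"
  shows "(\<lambda>n. M * (of_nat (Suc n) * r ^ n - (if n = 0 then 1 else 0))) sums (1 - deriv_lower_bound M r)"
proof -
  have "(\<lambda>n. of_nat (Suc n) * r ^ n - (if n = 0 then 1 else 0)) sums (1 / (1 - r) ^ 2 - 1)"
    using geometric_deriv_sums[of r] sums_single[of 0 "\<lambda>_. 1 :: real"] assms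
    by (intro sums_diff) auto
  then show ?thesis
    unfolding deriv_lower_bound_def by (simp add: sums_mult)
qed

lemma second_deriv_majorant_sums:
  fixes r :: real
  assumes "\<bar>r\<bar> < 1"
  shows "(\<lambda>n. M * (of_nat (Suc n) * of_nat (Suc (Suc n)) * r ^ n)) sums second_deriv_bound M r"
  using sums_mult[OF geometric_second_deriv_sums[of r], of M] assms
  by (simp add: second_deriv_bound_def ac_simps)

lemma bounded_coeff_class_derivs_sums:
  assumes "f \<in> bounded_coeff_class M" and "norm z < 1"
  obtains a where "a 1 = 1" and "\<forall>n\<ge>2. norm (a n) \<le> M"
    and "(\<lambda>n. diffs a n * z ^ n) sums deriv f z"
    and "(\<lambda>n. diffs (diffs a) n * z ^ n) sums deriv (deriv f) z"
proof -
  obtain a where a: "a 1 = 1" "\<forall>n\<ge>2. norm (a n) \<le> M" "\<forall>w\<in>ball 0 1. f w = (\<Sum>n. a n * w ^ n)"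
    using assms(1) unfolding bounded_coeff_class_def by blast
  have "summable (\<lambda>n. a n * w ^ n)" if "norm w < 1" for w
    using a(2) that by (rule summable_power_series_bounded_coeffs)
  from power_series_derivs_sums[OF a(3) this assms(2)] show ?thesis
    by (rule that[OF a(1,2)])
qed

lemma bounded_coeff_class_deriv_bounds:
  assumes "f \<in> bounded_coeff_class M" and z: "norm z < 1"
  shows "deriv_lower_bound M (norm z) \<le> norm (deriv f z)"
    and "norm (deriv (deriv f) z) \<le> second_deriv_bound M (norm z)"
proof -
  obtain a where a: "a 1 = 1" "\<forall>n\<ge>2. norm (a n) \<le> M"
    and f': "(\<lambda>n. diffs a n * z ^ n) sums deriv f z"
    and f'': "(\<lambda>n. diffs (diffs a) n * z ^ n) sums deriv (deriv f) z"
    using bounded_coeff_class_derivs_sums[OF assms] .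
  have tail: "(\<lambda>n. diffs a n * z ^ n - (if n = 0 then 1 else 0)) sums (deriv f z - 1)"
    using sums_diff[OF f' sums_single[of 0 "\<lambda>_. 1"]] by simp
  have "norm (diffs a n * z ^ n - (if n = 0 then 1 else 0))
      \<le> M * (of_nat (Suc n) * norm z ^ n - (if n = 0 then 1 else 0))" for n
  proof (cases n)
    case 0
    then show ?thesis using a(1) by (simp add: diffs_def)
  next
    case (Suc k)
    have "norm (a (Suc n)) \<le> M"
      using a(2) Suc by simp
    then show ?thesis
      using Suc by (simp add: diffs_def norm_mult norm_power mult_left_mono mult_right_mono del: of_nat_Suc)
  qed
  then have "norm (deriv f z - 1) \<le> 1 - deriv_lower_bound M (norm z)"
    using norm_sums_le[OF tail deriv_tail_majorant_sums] z by simp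
  then show "deriv_lower_bound M (norm z) \<le> norm (deriv f z)"
    using norm_triangle_ineq2[of 1 "deriv f z"] by (simp add: norm_minus_commute)
  have "norm (diffs (diffs a) n * z ^ n) \<le> M * (of_nat (Suc n) * of_nat (Suc (Suc n)) * norm z ^ n)" for n
  proof -
    have "norm (a (Suc (Suc n))) \<le> M"
      using a(2) by simp
    then show ?thesis
      by (simp add: diffs_def norm_mult norm_power mult_left_mono mult_right_mono del: of_nat_Suc)
  qed
  then show "norm (deriv (deriv f) z) \<le> second_deriv_bound M (norm z)"
    using norm_sums_le[OF f'' second_deriv_majorant_sums] z by simp
qed

definition extremal_coeff :: "real \<Rightarrow> nat \<Rightarrow> complex" where
  "extremal_coeff M n = (if n = 0 then 0 else if n = 1 then 1 else - of_real M)"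

definition extremal_fun :: "real \<Rightarrow> complex \<Rightarrow> complex" where
  "extremal_fun M z = (\<Sum>n. extremal_coeff M n * z ^ n)"

lemma extremal_coeff_bound: "0 \<le> M \<Longrightarrow> \<forall>n\<ge>2. norm (extremal_coeff M n) \<le> M"
  by (simp add: extremal_coeff_def)

lemma extremal_fun_in_class: "0 \<le> M \<Longrightarrow> extremal_fun M \<in> bounded_coeff_class M"
  unfolding bounded_coeff_class_def extremal_fun_def
  by (auto intro!: exI[of _ "extremal_coeff M"] simp: extremal_coeff_def)

lemma extremal_fun_derivs:
  assumes "0 \<le> M" and "\<bar>s\<bar> < 1"
  shows "deriv (extremal_fun M) (of_real s) = of_real (deriv_lower_bound M s)"
    and "deriv (deriv (extremal_fun M)) (of_real s) = - of_real (second_deriv_bound M s)"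
proof -
  have "summable (\<lambda>n. extremal_coeff M n * w ^ n)" if "norm w < 1" for w
    using extremal_coeff_bound[OF assms(1)] that by (rule summable_power_series_bounded_coeffs)
  moreover have "\<forall>w\<in>ball 0 1. extremal_fun M w = (\<Sum>n. extremal_coeff M n * w ^ n)"
    by (simp add: extremal_fun_def)
  moreover have "norm (of_real s :: complex) < 1"
    using assms(2) by simp
  ultimately have f': "(\<lambda>n. diffs (extremal_coeff M) n * of_real s ^ n) sums deriv (extremal_fun M) (of_real s)"
    and f'': "(\<lambda>n. diffs (diffs (extremal_coeff M)) n * of_real s ^ n) sums deriv (deriv (extremal_fun M)) (of_real s)"
    using power_series_derivs_sums by blast+
  have "(\<lambda>n. (if n = 0 then 1 else 0) - M * (of_nat (Suc n) * s ^ n - (if n = 0 then 1 else 0)))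
      sums (1 - (1 - deriv_lower_bound M s))"
    using sums_single[of 0 "\<lambda>_. 1"] deriv_tail_majorant_sums[OF assms(2)] by (rule sums_diff)
  moreover have "diffs (extremal_coeff M) n * of_real s ^ n
      = of_real ((if n = 0 then 1 else 0) - M * (of_nat (Suc n) * s ^ n - (if n = 0 then 1 else 0)))" for n
    by (cases n) (simp_all add: diffs_def extremal_coeff_def)
  ultimately have "(\<lambda>n. diffs (extremal_coeff M) n * of_real s ^ n) sums of_real (deriv_lower_bound M s)"
    using sums_of_real by fastforce
  with f' show "deriv (extremal_fun M) (of_real s) = of_real (deriv_lower_bound M s)"
    by (rule sums_unique2)
  have "diffs (diffs (extremal_coeff M)) n * of_real s ^ n
      = of_real (- (M * (of_nat (Suc n) * of_nat (Suc (Suc n)) * s ^ n)))" for n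
    by (simp add: diffs_def extremal_coeff_def)
  with sums_minus[OF second_deriv_majorant_sums[OF assms(2), of M]]
  have "(\<lambda>n. diffs (diffs (extremal_coeff M)) n * of_real s ^ n) sums of_real (- second_deriv_bound M s)"
    using sums_of_real by fastforce
  with f'' show "deriv (deriv (extremal_fun M)) (of_real s) = - of_real (second_deriv_bound M s)"
    by (simp add: sums_unique2)
qed

definition convexity_poly :: "real \<Rightarrow> real \<Rightarrow> real \<Rightarrow> real" where
  "convexity_poly M \<alpha> r = (1 - \<alpha>) * (1 + M) * (1 - r) ^ 3 - M * (1 - \<alpha> + (1 + \<alpha>) * r)"

lemma convexity_poly_eq:
  assumes "r < 1"
  shows "(1 - \<alpha>) * deriv_lower_bound M r - r * second_deriv_bound M r
    = convexity_poly M \<alpha> r / (1 - r) ^ 3"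
proof -
  define u where "u = 1 - r"
  have "u \<noteq> 0"
    using assms by (simp add: u_def)
  then have "((1 - \<alpha>) * deriv_lower_bound M r - r * second_deriv_bound M r) * u ^ 3
      = (1 - \<alpha>) * (u ^ 3 - M * u + M * u ^ 3) - 2 * M * (1 - u)"
    unfolding deriv_lower_bound_def second_deriv_bound_def u_def[symmetric]
    by (simp add: field_simps power2_eq_square power3_eq_cube) (simp add: u_def algebra_simps)
  also have "\<dots> = convexity_poly M \<alpha> r"
    unfolding convexity_poly_def u_def by (simp add: algebra_simps power2_eq_square power3_eq_cube)
  finally show ?thesis
    using \<open>u \<noteq> 0\<close> by (simp add: u_def eq_divide_eq)
qed

lemma convexity_poly_strict_antimono:
  assumes "M > 0" "0 \<le> \<alpha>" "\<alpha> < 1" "r < r'" "r' \<le> 1"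
  shows "convexity_poly M \<alpha> r' < convexity_poly M \<alpha> r"
proof -
  have "(1 - r') ^ 3 < (1 - r) ^ 3"
    using assms by (intro power_strict_mono) auto
  then have "(1 - \<alpha>) * (1 + M) * (1 - r') ^ 3 < (1 - \<alpha>) * (1 + M) * (1 - r) ^ 3"
    using assms by (intro mult_strict_left_mono) auto
  moreover have "M * (1 - \<alpha> + (1 + \<alpha>) * r) \<le> M * (1 - \<alpha> + (1 + \<alpha>) * r')"
    using assms by (intro mult_left_mono) auto
  ultimately show ?thesis
    unfolding convexity_poly_def by linarith
qed

lemma deriv_lower_bound_pos:
  assumes "M > 0" "\<alpha> < 1" "0 \<le> r" "r < 1" "convexity_poly M \<alpha> r \<ge> 0"
  shows "deriv_lower_bound M r > 0"
proof -
  define X where "X = (1 + M) * (1 - r) ^ 2 - M"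
  have poly: "convexity_poly M \<alpha> r = (1 - \<alpha>) * (1 - r) * X - 2 * M * r"
    unfolding convexity_poly_def X_def by (simp add: algebra_simps power2_eq_square power3_eq_cube)
  have "X > 0"
  proof (cases "r = 0")
    case True
    then show ?thesis unfolding X_def by simp
  next
    case False
    then have "2 * M * r > 0"
      using assms by simp
    then have "(1 - \<alpha>) * (1 - r) * X > 0"
      using poly assms(5) by linarith
    moreover have "(1 - \<alpha>) * (1 - r) > 0"
      using assms by simp
    ultimately show ?thesis
      by (simp add: zero_less_mult_iff)
  qed
  moreover have "deriv_lower_bound M r = X / (1 - r) ^ 2"
    unfolding X_def deriv_lower_bound_def using assms(4) by (simp add: field_simps)
  ultimately show ?thesis
    using assms(4) by simp
qed

lemma deriv_lower_bound_root:
  assumes "M > 0"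
  shows "deriv_lower_bound M (1 - sqrt (M / (1 + M))) = 0"
proof -
  have "M / (1 + M) < 1"
    using assms by simp
  then show ?thesis
    using assms by (simp add: deriv_lower_bound_def field_simps)
qed

lemma deriv_lower_bound_pos_below_root:
  assumes "M \<ge> 0" "s < 1 - sqrt (M / (1 + M))"
  shows "deriv_lower_bound M s > 0"
proof -
  have "sqrt (M / (1 + M)) ^ 2 < (1 - s) ^ 2"
    using assms by (intro power_strict_mono) auto
  then have "M < (1 + M) * (1 - s) ^ 2"
    using assms(1) by (simp add: field_simps)
  moreover have "sqrt (M / (1 + M)) \<ge> 0"
    using assms(1) by simp
  then have "1 - s > 0"
    using assms(2) by linarith
  ultimately show ?thesis
    unfolding deriv_lower_bound_def by (simp add: field_simps)
qed

lemma curvature_bound_le_iff: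
  assumes "r < 1" "deriv_lower_bound M r > 0"
  shows "r * second_deriv_bound M r / deriv_lower_bound M r \<le> 1 - \<alpha>
      \<longleftrightarrow> 0 \<le> convexity_poly M \<alpha> r"
    and "r * second_deriv_bound M r / deriv_lower_bound M r < 1 - \<alpha>
      \<longleftrightarrow> 0 < convexity_poly M \<alpha> r"
proof -
  have "0 \<le> convexity_poly M \<alpha> r \<longleftrightarrow> 0 \<le> convexity_poly M \<alpha> r / (1 - r) ^ 3"
    and "0 < convexity_poly M \<alpha> r \<longleftrightarrow> 0 < convexity_poly M \<alpha> r / (1 - r) ^ 3"
    using assms(1) by (simp_all add: le_divide_eq less_divide_eq)
  with assms show "r * second_deriv_bound M r / deriv_lower_bound M r \<le> 1 - \<alpha>
      \<longleftrightarrow> 0 \<le> convexity_poly M \<alpha> r"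
    and "r * second_deriv_bound M r / deriv_lower_bound M r < 1 - \<alpha>
      \<longleftrightarrow> 0 < convexity_poly M \<alpha> r"
    unfolding convexity_poly_eq[OF assms(1), symmetric]
    by (simp_all add: divide_le_eq divide_less_eq mult.commute)
qed

lemma bounded_coeff_class_curvature_le:
  assumes "f \<in> bounded_coeff_class M" and "norm z < 1"
    and pos: "deriv_lower_bound M (norm z) > 0"
  shows "deriv f z \<noteq> 0"
    and "norm (z * deriv (deriv f) z / deriv f z)
      \<le> norm z * second_deriv_bound M (norm z) / deriv_lower_bound M (norm z)"
proof -
  note bounds = bounded_coeff_class_deriv_bounds[OF assms(1,2)]
  then show "deriv f z \<noteq> 0"
    using pos by auto
  have num: "norm z * norm (deriv (deriv f) z) \<le> norm z * second_deriv_bound M (norm z)"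
    using bounds(2) by (simp add: mult_left_mono)
  have "norm z * norm (deriv (deriv f) z) / norm (deriv f z)
      \<le> norm z * second_deriv_bound M (norm z) / deriv_lower_bound M (norm z)"
    using frac_le[OF order_trans[OF _ num] num pos bounds(1)] by simp
  then show "norm (z * deriv (deriv f) z / deriv f z)
      \<le> norm z * second_deriv_bound M (norm z) / deriv_lower_bound M (norm z)"
    by (simp add: norm_mult norm_divide)
qed

text \<open>No hypothesis on the sign of the lower bound is needed: where it vanishes, both sides are 0
  because division by zero yields zero.\<close>

lemma extremal_fun_curvature:
  assumes "0 \<le> M" and "\<bar>s\<bar> < 1"
  shows "of_real s * deriv (deriv (extremal_fun M)) (of_real s) / deriv (extremal_fun M) (of_real s)
    = - of_real (s * second_deriv_bound M s / deriv_lower_bound M s)"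
  using extremal_fun_derivs[OF assms] by simp

lemma bounded_coeff_class_curvature_below_root:
  assumes "M > 0" "0 \<le> \<alpha>" "\<alpha> < 1" "r0 < 1" "convexity_poly M \<alpha> r0 = 0"
    and "f \<in> bounded_coeff_class M" and "norm z \<le> r0"
  shows "deriv f z \<noteq> 0"
    and "norm (z * deriv (deriv f) z / deriv f z) \<le> 1 - \<alpha>"
    and "norm z < r0 \<Longrightarrow> norm (z * deriv (deriv f) z / deriv f z) < 1 - \<alpha>"
proof -
  have z: "norm z < 1"
    using assms by simp
  have poly_pos: "0 < convexity_poly M \<alpha> (norm z)" if "norm z < r0"
    using convexity_poly_strict_antimono[OF assms(1-3) that] assms(4,5) by simp
  then have poly_nonneg: "0 \<le> convexity_poly M \<alpha> (norm z)"
    using assms(5,7) by fastforce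
  then have pos: "deriv_lower_bound M (norm z) > 0"
    using assms z by (intro deriv_lower_bound_pos) auto
  note curvature = bounded_coeff_class_curvature_le[OF assms(6) z pos]
  then show "deriv f z \<noteq> 0"
    by simp
  show "norm (z * deriv (deriv f) z / deriv f z) \<le> 1 - \<alpha>"
    using curvature(2) curvature_bound_le_iff(1)[OF z pos, where \<alpha> = \<alpha>] poly_nonneg by linarith
  show "norm (z * deriv (deriv f) z / deriv f z) < 1 - \<alpha>" if "norm z < r0"
    using curvature(2) curvature_bound_le_iff(2)[OF z pos, where \<alpha> = \<alpha>] poly_pos[OF that] by linarith
qed

lemma extremal_fun_beyond_root:
  assumes "M > 0" "0 \<le> \<alpha>" "\<alpha> < 1" "0 \<le> r0" "convexity_poly M \<alpha> r0 = 0" "r0 < r"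
  shows "\<exists>z. norm z < r \<and> (deriv (extremal_fun M) z = 0 \<or>
    (\<exists>t > 1 - \<alpha>. z * deriv (deriv (extremal_fun M)) z / deriv (extremal_fun M) z = - of_real t))"
proof (cases "1 - sqrt (M / (1 + M)) < r")
  case True
  define s where "s = 1 - sqrt (M / (1 + M))"
  have "0 \<le> s" "s < 1" "s < r"
    using assms(1) True by (auto simp: s_def)
  moreover have "deriv_lower_bound M s = 0"
    unfolding s_def using assms(1) by (rule deriv_lower_bound_root)
  ultimately show ?thesis
    using extremal_fun_derivs(1)[of M s] assms(1) by (intro exI[of _ "of_real s"]) simp
next
  case False
  define s where "s = (r0 + r) / 2"
  have s: "r0 < s" "s < r" "0 \<le> s"
    using assms by (auto simp: s_def)
  with False have below: "s < 1 - sqrt (M / (1 + M))"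
    by linarith
  then have pos: "deriv_lower_bound M s > 0"
    using assms(1) by (intro deriv_lower_bound_pos_below_root) auto
  have "sqrt (M / (1 + M)) > 0"
    using assms(1) by simp
  with below have s1: "s < 1"
    by linarith
  have "convexity_poly M \<alpha> s < 0"
    using convexity_poly_strict_antimono[OF assms(1-3) s(1)] s1 assms(5) by simp
  then have "s * second_deriv_bound M s / deriv_lower_bound M s > 1 - \<alpha>"
    using curvature_bound_le_iff(1)[OF s1 pos, of \<alpha>] by linarith
  then show ?thesis
    using extremal_fun_curvature[of M s] s s1 assms(1)
    by (intro exI[of _ "of_real s"]) auto
qed

lemma Sup_radius_eqI:
  fixes P :: "'b \<Rightarrow> 'a :: real_normed_vector \<Rightarrow> bool"
  assumes "0 < r0" "r0 \<le> 1"
    and below: "\<And>f z. f \<in> F \<Longrightarrow> norm z < r0 \<Longrightarrow> P f z"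
    and beyond: "\<And>r. r0 < r \<Longrightarrow> \<exists>f\<in>F. \<exists>z. norm z < r \<and> \<not> P f z"
  shows "Sup {r \<in> {0<..1}. \<forall>f\<in>F. \<forall>z. norm z < r \<longrightarrow> P f z} = r0"
proof (rule cSup_eq_maximum)
  show "r0 \<in> {r \<in> {0<..1}. \<forall>f\<in>F. \<forall>z. norm z < r \<longrightarrow> P f z}"
    using assms(1,2) below by auto
  show "r \<le> r0" if "r \<in> {r \<in> {0<..1}. \<forall>f\<in>F. \<forall>z. norm z < r \<longrightarrow> P f z}" for r
    using that beyond[of r] by force
qed

lemma radius_convexity_order_bounded_coeff_class:
  assumes "M > 0" "0 \<le> \<alpha>" "\<alpha> < 1" "0 < r0" "r0 < 1" "convexity_poly M \<alpha> r0 = 0"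
  shows "radius_convexity_order (bounded_coeff_class M) \<alpha> = r0"
  unfolding radius_convexity_order_def
proof (rule Sup_radius_eqI)
  fix f and z :: complex
  assume "f \<in> bounded_coeff_class M" "norm z < r0"
  then have "deriv f z \<noteq> 0" "norm (z * deriv (deriv f) z / deriv f z) < 1 - \<alpha>"
    using bounded_coeff_class_curvature_below_root[OF assms(1-3,5,6)] by auto
  moreover have "- Re (z * deriv (deriv f) z / deriv f z) \<le> norm (z * deriv (deriv f) z / deriv f z)"
    using complex_Re_le_cmod[of "- (z * deriv (deriv f) z / deriv f z)"] by simp
  ultimately show "deriv f z \<noteq> 0 \<and> Re (1 + z * deriv (deriv f) z / deriv f z) > \<alpha>"
    by simp
next
  fix r
  assume "r0 < r"
  then obtain z where "norm z < r" and extremal: "deriv (extremal_fun M) z = 0 \<or>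
      (\<exists>t > 1 - \<alpha>. z * deriv (deriv (extremal_fun M)) z / deriv (extremal_fun M) z = - of_real t)"
    using extremal_fun_beyond_root[OF assms(1-3) _ assms(6)] assms(4) by force
  moreover from extremal have "\<not> (deriv (extremal_fun M) z \<noteq> 0 \<and>
      Re (1 + z * deriv (deriv (extremal_fun M)) z / deriv (extremal_fun M) z) > \<alpha>)"
    by auto
  ultimately show "\<exists>f\<in>bounded_coeff_class M. \<exists>z. norm z < r \<and>
      \<not> (deriv f z \<noteq> 0 \<and> Re (1 + z * deriv (deriv f) z / deriv f z) > \<alpha>)"
    using extremal_fun_in_class[of M] assms(1) by auto
qed (use assms in auto)

lemma radius_uniform_convexity_bounded_coeff_class:
  assumes "M > 0" "0 < r1" "r1 < 1" "convexity_poly M (1/2) r1 = 0"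
  shows "radius_uniform_convexity (bounded_coeff_class M) = r1"
  unfolding radius_uniform_convexity_def
proof (rule Sup_radius_eqI)
  fix f and z :: complex
  assume "f \<in> bounded_coeff_class M" "norm z < r1"
  then have "deriv f z \<noteq> 0" "norm (z * deriv (deriv f) z / deriv f z) < 1/2"
    using bounded_coeff_class_curvature_below_root[of M "1/2" r1] assms by auto
  moreover have "- Re (z * deriv (deriv f) z / deriv f z) \<le> norm (z * deriv (deriv f) z / deriv f z)"
    using complex_Re_le_cmod[of "- (z * deriv (deriv f) z / deriv f z)"] by simp
  ultimately show "deriv f z \<noteq> 0 \<and>
      Re (1 + z * deriv (deriv f) z / deriv f z) > norm (z * deriv (deriv f) z / deriv f z)"
    by simp
next
  fix r
  assume "r1 < r"
  then obtain z where "norm z < r" and extremal: "deriv (extremal_fun M) z = 0 \<or>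
      (\<exists>t > 1 - 1/2. z * deriv (deriv (extremal_fun M)) z / deriv (extremal_fun M) z = - of_real t)"
    using extremal_fun_beyond_root[of M "1/2" r1 r] assms by force
  moreover from extremal have "\<not> (deriv (extremal_fun M) z \<noteq> 0 \<and>
      Re (1 + z * deriv (deriv (extremal_fun M)) z / deriv (extremal_fun M) z)
        > norm (z * deriv (deriv (extremal_fun M)) z / deriv (extremal_fun M) z))"
    by auto
  ultimately show "\<exists>f\<in>bounded_coeff_class M. \<exists>z. norm z < r \<and>
      \<not> (deriv f z \<noteq> 0 \<and>
        Re (1 + z * deriv (deriv f) z / deriv f z) > norm (z * deriv (deriv f) z / deriv f z))"
    using extremal_fun_in_class[of M] assms(1) by auto
qed (use assms in auto)

theorem corollary3p7:
  fixes M \<alpha> r0 r1 :: real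
  assumes "M > 0" and "0 \<le> \<alpha>" and "\<alpha> < 1"
    and "0 < r0" and "r0 < 1"
    and "(1 - \<alpha>) * (1 + M) * (1 - r0) ^ 3 = M * (1 - \<alpha> + (1 + \<alpha>) * r0)"
    and "0 < r1" and "r1 < 1"
    and "(1 - 1/2) * (1 + M) * (1 - r1) ^ 3 = M * (1 - 1/2 + (1 + 1/2) * r1)"
  shows "(\<forall>f\<in>bounded_coeff_class M. \<forall>z. norm z \<le> r0 \<longrightarrow>
            deriv f z \<noteq> 0 \<and> norm (z * deriv (deriv f) z / deriv f z) \<le> 1 - \<alpha>)
       \<and> (\<forall>r. r0 < r \<and> r \<le> 1 \<longrightarrow> (\<exists>f\<in>bounded_coeff_class M. \<exists>z. norm z < r \<and>
            (deriv f z = 0 \<or> norm (z * deriv (deriv f) z / deriv f z) > 1 - \<alpha>)))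
       \<and> radius_convexity_order (bounded_coeff_class M) \<alpha> = r0
       \<and> radius_uniform_convexity (bounded_coeff_class M) = r1"
proof -
  have root0: "convexity_poly M \<alpha> r0 = 0" and root1: "convexity_poly M (1/2) r1 = 0"
    using assms(6,9) by (simp_all add: convexity_poly_def)
  have "\<forall>f\<in>bounded_coeff_class M. \<forall>z. norm z \<le> r0 \<longrightarrow>
      deriv f z \<noteq> 0 \<and> norm (z * deriv (deriv f) z / deriv f z) \<le> 1 - \<alpha>"
    using bounded_coeff_class_curvature_below_root[OF assms(1-3,5) root0] by blast
  moreover have "\<forall>r. r0 < r \<and> r \<le> 1 \<longrightarrow> (\<exists>f\<in>bounded_coeff_class M. \<exists>z. norm z < r \<and>
      (deriv f z = 0 \<or> norm (z * deriv (deriv f) z / deriv f z) > 1 - \<alpha>))"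
    using extremal_fun_beyond_root[OF assms(1-3) _ root0] extremal_fun_in_class[of M] assms(1,4)
    by fastforce
  ultimately show ?thesis
    using radius_convexity_order_bounded_coeff_class[OF assms(1-5) root0]
      radius_uniform_convexity_bounded_coeff_class[OF assms(1,7,8) root1]
    by blast
qed

end
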